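(* Let $L$ and $M$ be finite-dimensional stem Lie superalgebras over a field of characteristic different from $2,3$. Then $L\sim M$ if and only if $L\cong M$.
   Context: Lie superalgebras: $\mathbb{Z}_2$-graded algebras $L=L_{\bar0}\oplus L_{\bar1}$ with graded skew-symmetric bracket satisfying the graded Jacobi identity; homomorphisms are even bracket-preserving linear maps. $Z(L)$ is the center, $L'=[L,L]$. $L$ is stem if $Z(L)\subseteq L'$. $L\sim M$ (isoclinic) means there are isomorphisms $\varphi:L/Z(L)\to M/Z(M)$ and $\theta:L'\to M'$ with $\theta([l,m])=[k,r]$ whenever $k+Z(M)=\varphi(l+Z(L))$ and $r+Z(M)=\varphi(m+Z(L))$. *)

theory Defs
  imports Complex_Main
begin

text \<open>A Lie superalgebra over a field 'k is modelled on a whole type 'a, with scalar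
multiplication sc, a Z2-grading G (G False = even part, G True = odd part;
Z2 is represented by bool with addition = xor), and a bracket br.\<close>

definition gsign :: "bool \<Rightarrow> bool \<Rightarrow> 'a::ab_group_add \<Rightarrow> 'a" where
  "gsign i j v = (if i \<and> j then - v else v)"

definition lie_superalgebra ::
  "('k::field \<Rightarrow> 'a::ab_group_add \<Rightarrow> 'a) \<Rightarrow> (bool \<Rightarrow> 'a set) \<Rightarrow> ('a \<Rightarrow> 'a \<Rightarrow> 'a) \<Rightarrow> bool" where
  "lie_superalgebra sc G br \<longleftrightarrow>
     vector_space sc \<and>
     module.subspace sc (G False) \<and> module.subspace sc (G True) \<and>
     G False \<inter> G True = {0} \<and>
     (\<forall>x. \<exists>a\<in>G False. \<exists>b\<in>G True. x = a + b) \<and>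
     (\<forall>x y z. br (x + y) z = br x z + br y z) \<and>
     (\<forall>x y z. br x (y + z) = br x y + br x z) \<and>
     (\<forall>c x y. br (sc c x) y = sc c (br x y)) \<and>
     (\<forall>c x y. br x (sc c y) = sc c (br x y)) \<and>
     (\<forall>i j x y. x \<in> G i \<longrightarrow> y \<in> G j \<longrightarrow> br x y \<in> G (i \<noteq> j)) \<and>
     (\<forall>i j x y. x \<in> G i \<longrightarrow> y \<in> G j \<longrightarrow> br x y = - gsign i j (br y x)) \<and>
     (\<forall>i j k x y z. x \<in> G i \<longrightarrow> y \<in> G j \<longrightarrow> z \<in> G k \<longrightarrow>
        gsign i k (br x (br y z)) + gsign j i (br y (br z x)) + gsign k j (br z (br x y)) = 0)"

definition fin_dim :: "('k::field \<Rightarrow> 'a::ab_group_add \<Rightarrow> 'a) \<Rightarrow> bool" where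
  "fin_dim sc \<longleftrightarrow> (\<exists>B. finite B \<and> module.span sc B = UNIV)"

definition lcenter :: "('a \<Rightarrow> 'a \<Rightarrow> 'a::ab_group_add) \<Rightarrow> 'a set" where
  "lcenter br = {z. \<forall>x. br z x = 0}"

definition derived :: "('k::field \<Rightarrow> 'a::ab_group_add \<Rightarrow> 'a) \<Rightarrow> ('a \<Rightarrow> 'a \<Rightarrow> 'a) \<Rightarrow> 'a set" where
  "derived sc br = module.span sc {br x y | x y. True}"

definition stem :: "('k::field \<Rightarrow> 'a::ab_group_add \<Rightarrow> 'a) \<Rightarrow> ('a \<Rightarrow> 'a \<Rightarrow> 'a) \<Rightarrow> bool" where
  "stem sc br \<longleftrightarrow> lcenter br \<subseteq> derived sc br"

definition lsa_isomorphic ::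
  "('k::field \<Rightarrow> 'a::ab_group_add \<Rightarrow> 'a) \<Rightarrow> (bool \<Rightarrow> 'a set) \<Rightarrow> ('a \<Rightarrow> 'a \<Rightarrow> 'a) \<Rightarrow>
   ('k \<Rightarrow> 'b::ab_group_add \<Rightarrow> 'b) \<Rightarrow> (bool \<Rightarrow> 'b set) \<Rightarrow> ('b \<Rightarrow> 'b \<Rightarrow> 'b) \<Rightarrow> bool" where
  "lsa_isomorphic sc1 G1 br1 sc2 G2 br2 \<longleftrightarrow>
     (\<exists>f. bij f \<and> Vector_Spaces.linear sc1 sc2 f \<and>
          (\<forall>x y. f (br1 x y) = br2 (f x) (f y)) \<and>
          (\<forall>i. f ` G1 i \<subseteq> G2 i))"

text \<open>Cosets of a subspace Z; the quotient L/Z is the set of all cosets, with the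
induced operations and grading (G i + Z)/Z.\<close>
definition coset_of :: "'a::ab_group_add set \<Rightarrow> 'a \<Rightarrow> 'a set" where
  "coset_of Z x = {x + z | z. z \<in> Z}"

definition isoclinic ::
  "('k::field \<Rightarrow> 'a::ab_group_add \<Rightarrow> 'a) \<Rightarrow> (bool \<Rightarrow> 'a set) \<Rightarrow> ('a \<Rightarrow> 'a \<Rightarrow> 'a) \<Rightarrow>
   ('k \<Rightarrow> 'b::ab_group_add \<Rightarrow> 'b) \<Rightarrow> (bool \<Rightarrow> 'b set) \<Rightarrow> ('b \<Rightarrow> 'b \<Rightarrow> 'b) \<Rightarrow> bool" where
  "isoclinic sc1 G1 br1 sc2 G2 br2 \<longleftrightarrow>
     (let cL = coset_of (lcenter br1); cM = coset_of (lcenter br2);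
          D1 = derived sc1 br1; D2 = derived sc2 br2 in
     \<exists>(\<phi> :: 'a set \<Rightarrow> 'b set) (\<theta> :: 'a \<Rightarrow> 'b).
       \<comment> \<open>phi: isomorphism of quotient Lie superalgebras\<close>
       bij_betw \<phi> (range cL) (range cM) \<and>
       (\<forall>x y u v. \<phi> (cL x) = cM u \<longrightarrow> \<phi> (cL y) = cM v \<longrightarrow>
          \<phi> (cL (x + y)) = cM (u + v) \<and> \<phi> (cL (br1 x y)) = cM (br2 u v)) \<and>
       (\<forall>c x u. \<phi> (cL x) = cM u \<longrightarrow> \<phi> (cL (sc1 c x)) = cM (sc2 c u)) \<and>
       (\<forall>i x. x \<in> G1 i \<longrightarrow> (\<exists>u\<in>G2 i. \<phi> (cL x) = cM u)) \<and>
       \<comment> \<open>theta: isomorphism of derived subalgebras\<close>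
       bij_betw \<theta> D1 D2 \<and>
       (\<forall>x\<in>D1. \<forall>y\<in>D1. \<theta> (x + y) = \<theta> x + \<theta> y \<and> \<theta> (br1 x y) = br2 (\<theta> x) (\<theta> y)) \<and>
       (\<forall>c. \<forall>x\<in>D1. \<theta> (sc1 c x) = sc2 c (\<theta> x)) \<and>
       (\<forall>i. \<theta> ` (D1 \<inter> G1 i) \<subseteq> G2 i) \<and>
       \<comment> \<open>compatibility\<close>
       (\<forall>l m k r. \<phi> (cL l) = cM k \<longrightarrow> \<phi> (cL m) = cM r \<longrightarrow> \<theta> (br1 l m) = br2 k r))"

end

theory Submission
  imports Defs
begin

(* By compatibility, theta lifts phi on brackets, hence by linearity on all of L'. Extend a
   homogeneous basis of L' to a homogeneous basis of L, map L' by theta and each new basis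
   vector to a homogeneous representative of its phi-image: this gives an even linear map f
   that extends theta and lifts phi. It preserves brackets because brackets lie in L', where
   f = theta and compatibility applies. If f x = 0 then x lies in Z(L), which is inside L'
   since L is stem, so theta x = 0 and x = 0; dually Z(M), being inside M' = theta(L'),
   gives surjectivity. Conversely an isomorphism maps Z(L) onto Z(M) and L' onto M' and so
   induces an isoclinism. *)

lemma (in module) coset_of_eq_iff:
  assumes "subspace Z"
  shows "coset_of Z x = coset_of Z y \<longleftrightarrow> x - y \<in> Z"
proof
  assume "coset_of Z x = coset_of Z y"
  moreover have "x \<in> coset_of Z x"
    unfolding coset_of_def using subspace_0[OF assms] by force
  ultimately obtain z where "z \<in> Z" "x = y + z"
    unfolding coset_of_def by blast
  then show "x - y \<in> Z" by simp
next
  assume "x - y \<in> Z"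
  then have "x + z \<in> coset_of Z y" "y + z \<in> coset_of Z x" if "z \<in> Z" for z
  proof -
    have "x + z = y + ((x - y) + z)" "y + z = x + (- (x - y) + z)"
      by (simp_all add: algebra_simps)
    moreover have "(x - y) + z \<in> Z" "- (x - y) + z \<in> Z"
      using that \<open>x - y \<in> Z\<close> subspace_add[OF assms] subspace_neg[OF assms] by blast+
    ultimately show "x + z \<in> coset_of Z y" "y + z \<in> coset_of Z x"
      unfolding coset_of_def by blast+
  qed
  then show "coset_of Z x = coset_of Z y"
    unfolding coset_of_def by blast
qed

lemma image_coset_of:
  assumes "\<And>x y. f (x + y) = f x + f y"
  shows "f ` coset_of Z x = coset_of (f ` Z) (f x)"
proof -
  have "f x + f z \<in> f ` {x + z |z. z \<in> Z}" if "z \<in> Z" for z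
    using that by (auto simp: image_iff assms[symmetric])
  then show ?thesis
    unfolding coset_of_def by (auto simp: assms)
qed

lemma bij_image_lcenter:
  assumes f: "bij f" "f 0 = 0" and hom: "\<And>x y. f (br x y) = br' (f x) (f y)"
  shows "f ` lcenter br = lcenter br'"
proof -
  have inj: "inj f" and surj: "surj f"
    using f(1) by (simp_all add: bij_is_inj bij_is_surj)
  have center_iff: "f z \<in> lcenter br' \<longleftrightarrow> z \<in> lcenter br" for z
  proof -
    have "f z \<in> lcenter br' \<longleftrightarrow> (\<forall>y. br' (f z) y = 0)"
      unfolding lcenter_def by simp
    also have "\<dots> \<longleftrightarrow> (\<forall>x. br' (f z) (f x) = 0)"
      using surj by (metis surj_f_inv_f)
    also have "\<dots> \<longleftrightarrow> (\<forall>x. f (br z x) = f 0)"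
      by (simp add: hom f(2))
    also have "\<dots> \<longleftrightarrow> z \<in> lcenter br"
      unfolding lcenter_def using inj by (simp add: inj_eq)
    finally show ?thesis .
  qed
  show ?thesis
  proof
    show "f ` lcenter br \<subseteq> lcenter br'"
      using center_iff by blast
    show "lcenter br' \<subseteq> f ` lcenter br"
    proof
      fix w assume "w \<in> lcenter br'"
      moreover obtain z where "w = f z"
        using surj by (metis surjD)
      ultimately show "w \<in> f ` lcenter br"
        using center_iff by blast
    qed
  qed
qed

locale graded_vector_space = vector_space scale
  for scale :: "'k::field \<Rightarrow> 'a::ab_group_add \<Rightarrow> 'a" +
  fixes G :: "bool \<Rightarrow> 'a set"
  assumes subspace_grade: "subspace (G i)"
    and grade_inter: "G False \<inter> G True = {0}"
    and grade_decomp: "\<exists>a\<in>G False. \<exists>b\<in>G True. x = a + b"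
begin

lemma homogeneous_eq_0: "x \<in> G i \<Longrightarrow> x \<in> G j \<Longrightarrow> i \<noteq> j \<Longrightarrow> x = 0"
  using grade_inter by (cases i; cases j) auto

lemma homogeneous_sum_eq_0:
  assumes "u \<in> G i" "v \<in> G j" "i \<noteq> j" "u + v = 0"
  shows "u = 0"
proof -
  have "u = - v"
    using assms(4) by (simp add: eq_neg_iff_add_eq_0)
  then have "u \<in> G j"
    using subspace_neg[OF subspace_grade assms(2)] by simp
  then show ?thesis
    using homogeneous_eq_0 assms(1,3) by blast
qed

lemma span_homogeneous_component:
  assumes C: "C \<subseteq> G False \<union> G True" and x: "x \<in> G i" "x \<in> span C"
  shows "x \<in> span (C \<inter> G i)"
proof -
  have "C = (C \<inter> G i) \<union> (C \<inter> G (\<not> i))"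
    using C by (cases i) auto
  then obtain a b where ab: "a \<in> span (C \<inter> G i)" "b \<in> span (C \<inter> G (\<not> i))" "x = a + b"
    using x(2) span_Un[of "C \<inter> G i" "C \<inter> G (\<not> i)"] by auto
  have "a \<in> G i" "b \<in> G (\<not> i)"
    using ab(1,2) span_minimal[OF _ subspace_grade] by blast+
  then have "b \<in> G i"
    using subspace_diff[OF subspace_grade x(1)] ab(3) by (metis add_diff_cancel_left')
  then have "b = 0"
    using homogeneous_eq_0 \<open>b \<in> G (\<not> i)\<close> by blast
  then show ?thesis
    using ab by simp
qed

lemma span_graded:
  assumes "\<And>s. s \<in> S \<Longrightarrow> \<exists>a\<in>span S \<inter> G False. \<exists>b\<in>span S \<inter> G True. s = a + b"
    and "d \<in> span S"
  shows "\<exists>a\<in>span S \<inter> G False. \<exists>b\<in>span S \<inter> G True. d = a + b"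
proof -
  let ?W0 = "span S \<inter> G False" and ?W1 = "span S \<inter> G True"
  have W: "subspace ?W0" "subspace ?W1"
    by (simp_all add: subspace_inter subspace_grade)
  have "subspace {a + b |a b. a \<in> ?W0 \<and> b \<in> ?W1}"
  proof (rule subspaceI)
    show "0 \<in> {a + b |a b. a \<in> ?W0 \<and> b \<in> ?W1}"
      using subspace_0[OF W(1)] subspace_0[OF W(2)] by force
  next
    fix x y assume "x \<in> {a + b |a b. a \<in> ?W0 \<and> b \<in> ?W1}" "y \<in> {a + b |a b. a \<in> ?W0 \<and> b \<in> ?W1}"
    then obtain a b a' b' where "a \<in> ?W0" "b \<in> ?W1" "a' \<in> ?W0" "b' \<in> ?W1"
      "x = a + b" "y = a' + b'"
      by blast
    moreover from this have "x + y = (a + a') + (b + b')"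
      by (simp add: algebra_simps)
    moreover have "a + a' \<in> ?W0" "b + b' \<in> ?W1"
      using subspace_add[OF W(1)] subspace_add[OF W(2)] calculation(1-4) by blast+
    ultimately show "x + y \<in> {a + b |a b. a \<in> ?W0 \<and> b \<in> ?W1}"
      by blast
  next
    fix c x assume "x \<in> {a + b |a b. a \<in> ?W0 \<and> b \<in> ?W1}"
    then obtain a b where "a \<in> ?W0" "b \<in> ?W1" "x = a + b"
      by blast
    moreover from this have "scale c x = scale c a + scale c b"
      by (simp add: scale_right_distrib)
    moreover have "scale c a \<in> ?W0" "scale c b \<in> ?W1"
      using subspace_scale[OF W(1)] subspace_scale[OF W(2)] calculation(1,2) by blast+
    ultimately show "scale c x \<in> {a + b |a b. a \<in> ?W0 \<and> b \<in> ?W1}"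
      by blast
  qed
  then have "span S \<subseteq> {a + b |a b. a \<in> ?W0 \<and> b \<in> ?W1}"
    using assms(1) by (intro span_minimal) blast+
  then show ?thesis
    using assms(2) by blast
qed

lemma homogeneous_basis_extend:
  assumes D: "\<And>d. d \<in> D \<Longrightarrow> \<exists>a\<in>D \<inter> G False. \<exists>b\<in>D \<inter> G True. d = a + b"
  obtains B C where "B \<subseteq> D" "D \<subseteq> span B" "B \<subseteq> C" "C \<subseteq> G False \<union> G True"
    "independent C" "span C = UNIV"
proof -
  let ?H = "G False \<union> G True"
  obtain B where "{} \<subseteq> B" and B: "B \<subseteq> D \<inter> ?H" "independent B" "D \<inter> ?H \<subseteq> span B"
    by (rule maximal_independent_subset_extend[of "{}" "D \<inter> ?H"]) (simp_all add: independent_empty)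
  obtain C where C: "B \<subseteq> C" "C \<subseteq> ?H" "independent C" "?H \<subseteq> span C"
  proof (rule maximal_independent_subset_extend[of B ?H])
    show "B \<subseteq> ?H" "independent B"
      using B(1,2) by auto
  qed
  have "D \<subseteq> span B"
  proof
    fix d assume "d \<in> D"
    then obtain a b where "a \<in> D \<inter> G False" "b \<in> D \<inter> G True" "d = a + b"
      using D by blast
    with B(3) show "d \<in> span B"
      by (simp add: span_add subset_iff)
  qed
  moreover have "span C = UNIV"
  proof (intro set_eqI iffI)
    fix x
    obtain a b where "a \<in> G False" "b \<in> G True" "x = a + b"
      using grade_decomp by blast
    with C(4) show "x \<in> span C"
      by (simp add: span_add subset_iff)
  qed simp
  ultimately show thesis
    using B(1) C by (intro that) auto
qed

end

locale graded_vector_space_pair =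
  V1: graded_vector_space sc1 G1 + V2: graded_vector_space sc2 G2
  for sc1 :: "'k::field \<Rightarrow> 'a::ab_group_add \<Rightarrow> 'a" and G1 :: "bool \<Rightarrow> 'a set"
    and sc2 :: "'k \<Rightarrow> 'b::ab_group_add \<Rightarrow> 'b" and G2 :: "bool \<Rightarrow> 'b set"
begin

sublocale vector_space_pair sc1 sc2 ..

lemma linear_related_on_span:
  assumes f: "Vector_Spaces.linear sc1 sc2 f" and R: "R 0 0"
    "\<And>x y u v. R x u \<Longrightarrow> R y v \<Longrightarrow> R (x + y) (u + v)"
    "\<And>c x u. R x u \<Longrightarrow> R (sc1 c x) (sc2 c u)"
    and C: "\<And>b. b \<in> C \<Longrightarrow> R b (f b)" and x: "x \<in> V1.span C"
  shows "R x (f x)"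
proof -
  have "V1.subspace {x. R x (f x)}"
    using R by (intro V1.subspaceI) (simp_all add: linear_0[OF f] linear_add[OF f] linear_scale[OF f])
  then have "V1.span C \<subseteq> {x. R x (f x)}"
    using C by (intro V1.span_minimal) auto
  then show ?thesis
    using x by blast
qed

lemma linear_even_if_even_on_spanning_set:
  assumes f: "Vector_Spaces.linear sc1 sc2 f"
    and C: "C \<subseteq> G1 False \<union> G1 True" "V1.span C = UNIV"
    and even: "\<And>b i. b \<in> C \<Longrightarrow> b \<in> G1 i \<Longrightarrow> f b \<in> G2 i"
  shows "f ` G1 i \<subseteq> G2 i"
proof
  fix w assume "w \<in> f ` G1 i"
  then obtain x where x: "x \<in> G1 i" "w = f x"
    by blast
  have "V1.span (C \<inter> G1 i) \<subseteq> {x. f x \<in> G2 i}"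
    using even linear_subspace_linear_preimage[OF f V2.subspace_grade]
    by (intro V1.span_minimal) auto
  then show "w \<in> G2 i"
    using V1.span_homogeneous_component[OF C(1) x(1)] C(2) x(2) by auto
qed

lemma homogeneous_related_choice:
  assumes "\<And>i x. x \<in> G1 i \<Longrightarrow> \<exists>u\<in>G2 i. R x u"
  obtains h where "\<And>b i. b \<in> G1 i \<Longrightarrow> b \<noteq> 0 \<Longrightarrow> h b \<in> G2 i \<and> R b (h b)"
proof
  fix b i
  assume b: "b \<in> G1 i" "b \<noteq> 0"
  then have "i = (b \<in> G1 True)"
    using V1.homogeneous_eq_0[OF b(1), of "\<not> i"] by (cases i) auto
  then show "(SOME u. u \<in> G2 (b \<in> G1 True) \<and> R b u) \<in> G2 i \<and>
    R b (SOME u. u \<in> G2 (b \<in> G1 True) \<and> R b u)"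
    using someI_ex[of "\<lambda>u. u \<in> G2 i \<and> R b u"] assms[OF b(1)] by auto
qed

lemma even_linear_extension:
  assumes D: "V1.subspace D" "\<And>d. d \<in> D \<Longrightarrow> \<exists>a\<in>D \<inter> G1 False. \<exists>b\<in>D \<inter> G1 True. d = a + b"
    and \<theta>: "\<And>x y. x \<in> D \<Longrightarrow> y \<in> D \<Longrightarrow> \<theta> (x + y) = \<theta> x + \<theta> y"
      "\<And>c x. x \<in> D \<Longrightarrow> \<theta> (sc1 c x) = sc2 c (\<theta> x)"
      "\<And>i. \<theta> ` (D \<inter> G1 i) \<subseteq> G2 i"
    and R: "\<And>x y u v. R x u \<Longrightarrow> R y v \<Longrightarrow> R (x + y) (u + v)"
      "\<And>c x u. R x u \<Longrightarrow> R (sc1 c x) (sc2 c u)"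
      "\<And>i x. x \<in> G1 i \<Longrightarrow> \<exists>u\<in>G2 i. R x u"
      "\<And>d. d \<in> D \<Longrightarrow> R d (\<theta> d)"
  obtains f where "Vector_Spaces.linear sc1 sc2 f" "\<And>d. d \<in> D \<Longrightarrow> f d = \<theta> d"
    "\<And>x. R x (f x)" "\<And>i. f ` G1 i \<subseteq> G2 i"
proof -
  obtain B C where B: "B \<subseteq> D" "D \<subseteq> V1.span B" and C: "B \<subseteq> C" "C \<subseteq> G1 False \<union> G1 True"
    "V1.independent C" "V1.span C = UNIV"
    using V1.homogeneous_basis_extend[OF D(2)] by blast
  have \<theta>0: "\<theta> 0 = 0"
    using \<theta>(1)[of 0 0] V1.subspace_0[OF D(1)] by simp
  obtain h where h: "\<And>b i. b \<in> G1 i \<Longrightarrow> b \<noteq> 0 \<Longrightarrow> h b \<in> G2 i \<and> R b (h b)"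
    using homogeneous_related_choice[where R = R, OF R(3)] by blast
  define g where "g b = (if b \<in> D then \<theta> b else h b)" for b
  have g: "R b (g b) \<and> g b \<in> G2 i" if b: "b \<in> C" "b \<in> G1 i" for b i
  proof -
    have "b \<noteq> 0"
      using C(3) b(1) V1.dependent_zero by blast
    then show ?thesis
      using \<theta>(3) R(4) b(2) h[OF b(2)] unfolding g_def by auto
  qed
  define f where "f = construct C g"
  have f: "Vector_Spaces.linear sc1 sc2 f"
    unfolding f_def by (rule linear_construct[OF C(3)])
  have f_basis: "f b = g b" if "b \<in> C" for b
    unfolding f_def by (rule construct_basis[OF C(3) that])
  have "d \<in> D \<and> f d = \<theta> d" if "d \<in> D" for d
    by (rule linear_related_on_span[OF f, where R = "\<lambda>x u. x \<in> D \<and> u = \<theta> x" and C = B])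
      (use V1.subspace_0[OF D(1)] V1.subspace_add[OF D(1)] V1.subspace_scale[OF D(1)] \<theta> \<theta>0
        B C(1) f_basis that in \<open>auto simp: g_def subset_iff\<close>)
  moreover have "R x (f x)" for x
    by (rule linear_related_on_span[OF f, where R = R and C = C])
      (use R(1,2) R(4)[of 0] \<theta>0 V1.subspace_0[OF D(1)] C(2,4) g f_basis in auto)
  moreover have "f ` G1 i \<subseteq> G2 i" for i
    using linear_even_if_even_on_spanning_set[OF f C(2,4)] g f_basis by auto
  ultimately show thesis
    using that f B(2) C(4) by blast
qed

end

locale lsa =
  fixes sc :: "'k::field \<Rightarrow> 'a::ab_group_add \<Rightarrow> 'a" and G :: "bool \<Rightarrow> 'a set"
    and br :: "'a \<Rightarrow> 'a \<Rightarrow> 'a"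
  assumes lie_superalgebra: "lie_superalgebra sc G br"
begin

lemma lie_superalgebra_facts:
  "vector_space sc" "module.subspace sc (G False)" "module.subspace sc (G True)"
  "G False \<inter> G True = {0}" "\<forall>x. \<exists>a\<in>G False. \<exists>b\<in>G True. x = a + b"
  "\<forall>x y z. br (x + y) z = br x z + br y z"
  "\<forall>x y z. br x (y + z) = br x y + br x z"
  "\<forall>c x y. br (sc c x) y = sc c (br x y)"
  "\<forall>i j x y. x \<in> G i \<longrightarrow> y \<in> G j \<longrightarrow> br x y \<in> G (i \<noteq> j)"
  "\<forall>i j x y. x \<in> G i \<longrightarrow> y \<in> G j \<longrightarrow> br x y = - gsign i j (br y x)"
  using lie_superalgebra unfolding lie_superalgebra_def
   apply -
   apply (elim conjE, assumption)+
  done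

sublocale graded_vector_space sc G
proof (rule graded_vector_space.intro)
  show "vector_space sc"
    by (fact lie_superalgebra_facts(1))
  show "graded_vector_space_axioms sc G"
  proof
    show "module.subspace sc (G i)" for i
      using lie_superalgebra_facts(2,3) by (cases i) simp_all
  qed (use lie_superalgebra_facts(4,5) in blast)+
qed

lemmas br_add_left = lie_superalgebra_facts(6)[rule_format]
  and br_add_right = lie_superalgebra_facts(7)[rule_format]
  and br_scale_left = lie_superalgebra_facts(8)[rule_format]
  and br_grade = lie_superalgebra_facts(9)[rule_format]
  and br_skew = lie_superalgebra_facts(10)[rule_format]

lemma br_diff_left: "br (x - y) z = br x z - br y z"
  using br_add_left[of "x - y" y z] by (simp add: eq_diff_eq)

lemma br_diff_right: "br x (y - z) = br x y - br x z"
  using br_add_right[of x "y - z" z] by (simp add: eq_diff_eq)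

lemma br_zero_left: "br 0 y = 0"
  using br_diff_left[of 0 0 y] by simp

lemma subspace_lcenter: "subspace (lcenter br)"
  unfolding lcenter_def by (intro subspaceI) (simp_all add: br_zero_left br_add_left br_scale_left)

text \<open>\<open>lcenter\<close> only asks \<open>z\<close> to be central from the left; by the grading and skew
  symmetry it is central from the right as well.\<close>
lemma br_lcenter_right:
  assumes z: "z \<in> lcenter br"
  shows "br x z = 0"
proof -
  obtain c0 c1 where c: "c0 \<in> G False" "c1 \<in> G True" "z = c0 + c1"
    using grade_decomp by blast
  have comm: "br a c = 0" if "c \<in> G j" "c \<in> {c0, c1}" "a \<in> G i" for c a i j
  proof -
    have "br c0 a + br c1 a = 0"
      using z c(3) br_add_left unfolding lcenter_def by simp
    moreover have "br c0 a \<in> G i" "br c1 a \<in> G (\<not> i)"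
      using br_grade[OF c(1) that(3)] br_grade[OF c(2) that(3)] by simp_all
    ultimately have "br c0 a = 0" "br c1 a = 0"
      using homogeneous_sum_eq_0[of "br c0 a" i "br c1 a" "\<not> i"]
        homogeneous_sum_eq_0[of "br c1 a" "\<not> i" "br c0 a" i] by (simp_all add: add.commute)
    then have "br c a = 0"
      using that(2) by blast
    then show ?thesis
      using br_skew[OF that(3,1)] by (simp add: gsign_def)
  qed
  obtain a0 a1 where a: "a0 \<in> G False" "a1 \<in> G True" "x = a0 + a1"
    using grade_decomp by blast
  have "br x z = br a0 c0 + br a0 c1 + (br a1 c0 + br a1 c1)"
    using a(3) c(3) by (simp add: br_add_left br_add_right)
  then show ?thesis
    using comm a c by simp
qed

lemma br_eq_mod_lcenter:
  assumes "a - a' \<in> lcenter br" "b - b' \<in> lcenter br"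
  shows "br a b = br a' b'"
proof -
  have "br a b - br a' b = 0"
    using assms(1) unfolding lcenter_def by (simp flip: br_diff_left)
  moreover have "br a' b - br a' b' = 0"
    using br_lcenter_right[OF assms(2)] by (simp flip: br_diff_right)
  ultimately show ?thesis
    by simp
qed

lemma lcenter_coset_eq_iff: "coset_of (lcenter br) x = coset_of (lcenter br) y \<longleftrightarrow> x - y \<in> lcenter br"
  by (rule coset_of_eq_iff[OF subspace_lcenter])

lemma subspace_derived: "subspace (derived sc br)"
  unfolding derived_def by simp

lemma br_in_derived: "br x y \<in> derived sc br"
  unfolding derived_def by (rule span_base) blast

lemma derived_graded:
  assumes "d \<in> derived sc br"
  shows "\<exists>a\<in>derived sc br \<inter> G False. \<exists>b\<in>derived sc br \<inter> G True. d = a + b"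
  unfolding derived_def
proof (rule span_graded)
  show "d \<in> span {br x y |x y. True}"
    using assms unfolding derived_def .
next
  fix s assume "s \<in> {br x y |x y. True}"
  then obtain x y where s: "s = br x y"
    by blast
  obtain x0 x1 y0 y1 where x: "x0 \<in> G False" "x1 \<in> G True" "x = x0 + x1"
    and y: "y0 \<in> G False" "y1 \<in> G True" "y = y0 + y1"
    using grade_decomp by meson
  have "s = (br x0 y0 + br x1 y1) + (br x0 y1 + br x1 y0)"
    using s x(3) y(3) by (simp add: br_add_left br_add_right algebra_simps)
  moreover have "br x0 y0 \<in> G False" "br x1 y1 \<in> G False" "br x0 y1 \<in> G True" "br x1 y0 \<in> G True"
    using br_grade[OF x(1) y(1)] br_grade[OF x(2) y(2)] br_grade[OF x(1) y(2)] br_grade[OF x(2) y(1)]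
    by simp_all
  then have "br x0 y0 + br x1 y1 \<in> G False" "br x0 y1 + br x1 y0 \<in> G True"
    by (simp_all add: subspace_add[OF subspace_grade])
  moreover have "br x0 y0 + br x1 y1 \<in> derived sc br" "br x0 y1 + br x1 y0 \<in> derived sc br"
    by (simp_all add: subspace_add[OF subspace_derived] br_in_derived)
  ultimately show "\<exists>a\<in>span {br x y |x y. True} \<inter> G False. \<exists>b\<in>span {br x y |x y. True} \<inter> G True. s = a + b"
    unfolding derived_def by blast
qed

end

text \<open>\<open>center_coset br x\<close> is the class \<open>x + Z(L)\<close> in \<open>L/Z(L)\<close>; an equation
  \<open>\<phi> (center_coset br1 x) = center_coset br2 u\<close> says that \<open>u\<close> represents \<open>\<phi> (x + Z(L))\<close>.\<close>
abbreviation center_coset :: "('a \<Rightarrow> 'a \<Rightarrow> 'a::ab_group_add) \<Rightarrow> 'a \<Rightarrow> 'a set" where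
  "center_coset br \<equiv> coset_of (lcenter br)"

locale lsa_pair = L1: lsa sc1 G1 br1 + L2: lsa sc2 G2 br2
  for sc1 :: "'k::field \<Rightarrow> 'a::ab_group_add \<Rightarrow> 'a" and G1 :: "bool \<Rightarrow> 'a set"
    and br1 :: "'a \<Rightarrow> 'a \<Rightarrow> 'a"
    and sc2 :: "'k \<Rightarrow> 'b::ab_group_add \<Rightarrow> 'b" and G2 :: "bool \<Rightarrow> 'b set"
    and br2 :: "'b \<Rightarrow> 'b \<Rightarrow> 'b"
begin

sublocale graded_vector_space_pair sc1 G1 sc2 G2 ..

lemma linear_image_derived:
  assumes f: "Vector_Spaces.linear sc1 sc2 f" "surj f"
    and hom: "\<And>x y. f (br1 x y) = br2 (f x) (f y)"
  shows "f ` derived sc1 br1 = derived sc2 br2"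
proof -
  have "f ` {br1 x y |x y. True} = {br2 x y |x y. True}"
  proof
    show "f ` {br1 x y |x y. True} \<subseteq> {br2 x y |x y. True}"
      using hom by blast
    show "{br2 x y |x y. True} \<subseteq> f ` {br1 x y |x y. True}"
    proof clarify
      fix u v
      obtain x y where "u = f x" "v = f y"
        using f(2) by (metis surjD)
      then have "br2 u v = f (br1 x y)"
        by (simp add: hom)
      then show "br2 u v \<in> f ` {br1 x y |x y. True}"
        by blast
    qed
  qed
  then show ?thesis
    unfolding derived_def by (metis linear_span_image[OF f(1)])
qed

lemma bij_image_center_coset:
  assumes f: "bij f" "Vector_Spaces.linear sc1 sc2 f" "\<And>x y. f (br1 x y) = br2 (f x) (f y)"
  shows "f ` center_coset br1 x = center_coset br2 (f x)"
proof -
  have "f ` lcenter br1 = lcenter br2"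
    by (rule bij_image_lcenter[where br = br1 and br' = br2, OF f(1) linear_0[OF f(2)] f(3)])
  then show ?thesis
    using image_coset_of[of f "lcenter br1" x] linear_add[OF f(2)] by simp
qed

lemma bij_betw_image_center_coset:
  assumes f: "bij f" "Vector_Spaces.linear sc1 sc2 f" "\<And>x y. f (br1 x y) = br2 (f x) (f y)"
  shows "bij_betw ((`) f) (range (center_coset br1)) (range (center_coset br2))"
proof -
  have "(`) f ` range (center_coset br1) = range (\<lambda>x. center_coset br2 (f x))"
    by (simp add: image_image bij_image_center_coset[OF f])
  also have "\<dots> = range (center_coset br2)"
    using bij_is_surj[OF f(1)] by (simp add: range_composition)
  finally have "(`) f ` range (center_coset br1) = range (center_coset br2)" .
  moreover have "inj_on ((`) f) (range (center_coset br1))"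
    using bij_is_inj[OF f(1)] by (simp add: inj_on_def inj_image_eq_iff)
  ultimately show ?thesis
    by (simp add: bij_betw_def)
qed

end

locale isoclinism = lsa_pair sc1 G1 br1 sc2 G2 br2
  for sc1 :: "'k::field \<Rightarrow> 'a::ab_group_add \<Rightarrow> 'a" and G1 br1
    and sc2 :: "'k \<Rightarrow> 'b::ab_group_add \<Rightarrow> 'b" and G2 br2 +
  fixes \<phi> :: "'a set \<Rightarrow> 'b set" and \<theta> :: "'a \<Rightarrow> 'b"
  assumes phi_bij: "bij_betw \<phi> (range (center_coset br1)) (range (center_coset br2))"
    and phi_hom: "\<And>x y u v. \<phi> (center_coset br1 x) = center_coset br2 u \<Longrightarrow>
      \<phi> (center_coset br1 y) = center_coset br2 v \<Longrightarrow>
      \<phi> (center_coset br1 (x + y)) = center_coset br2 (u + v) \<and>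
      \<phi> (center_coset br1 (br1 x y)) = center_coset br2 (br2 u v)"
    and phi_scale: "\<And>c x u. \<phi> (center_coset br1 x) = center_coset br2 u \<Longrightarrow>
      \<phi> (center_coset br1 (sc1 c x)) = center_coset br2 (sc2 c u)"
    and phi_grade: "\<And>i x. x \<in> G1 i \<Longrightarrow> \<exists>u\<in>G2 i. \<phi> (center_coset br1 x) = center_coset br2 u"
    and theta_bij: "bij_betw \<theta> (derived sc1 br1) (derived sc2 br2)"
    and theta_hom: "\<And>x y. x \<in> derived sc1 br1 \<Longrightarrow> y \<in> derived sc1 br1 \<Longrightarrow>
      \<theta> (x + y) = \<theta> x + \<theta> y \<and> \<theta> (br1 x y) = br2 (\<theta> x) (\<theta> y)"
    and theta_scale: "\<And>c x. x \<in> derived sc1 br1 \<Longrightarrow> \<theta> (sc1 c x) = sc2 c (\<theta> x)"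
    and theta_grade: "\<And>i. \<theta> ` (derived sc1 br1 \<inter> G1 i) \<subseteq> G2 i"
    and compatible: "\<And>l m k r. \<phi> (center_coset br1 l) = center_coset br2 k \<Longrightarrow>
      \<phi> (center_coset br1 m) = center_coset br2 r \<Longrightarrow> \<theta> (br1 l m) = br2 k r"

lemma (in lsa_pair) isoclinic_iff_isoclinism:
  "isoclinic sc1 G1 br1 sc2 G2 br2 \<longleftrightarrow> (\<exists>\<phi> \<theta>. isoclinism sc1 G1 br1 sc2 G2 br2 \<phi> \<theta>)"
  unfolding isoclinic_def Let_def isoclinism_def isoclinism_axioms_def
  by (simp add: lsa_pair_axioms Ball_def)

context isoclinism
begin

lemma phi_lift_exists: "\<exists>u. \<phi> (center_coset br1 x) = center_coset br2 u"
  using phi_bij unfolding bij_betw_def by blast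

lemma phi_zero: "\<phi> (center_coset br1 0) = center_coset br2 0"
proof -
  obtain u where "\<phi> (center_coset br1 0) = center_coset br2 u"
    using phi_lift_exists by blast
  from phi_scale[OF this, of 0] show ?thesis
    by simp
qed

lemma theta_zero: "\<theta> 0 = 0"
  using theta_scale[OF L1.subspace_0[OF L1.subspace_derived], of 0] by simp

text \<open>On brackets this is the compatibility condition; it spreads to all of \<open>L'\<close>
  by linearity.\<close>
lemma theta_lifts_phi:
  assumes "d \<in> derived sc1 br1"
  shows "\<phi> (center_coset br1 d) = center_coset br2 (\<theta> d)"
proof -
  let ?P = "{d \<in> derived sc1 br1. \<phi> (center_coset br1 d) = center_coset br2 (\<theta> d)}"
  have "L1.span {br1 x y |x y. True} \<subseteq> ?P"
  proof (rule L1.span_minimal)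
    show "{br1 x y |x y. True} \<subseteq> ?P"
    proof
      fix w assume "w \<in> {br1 x y |x y. True}"
      then obtain x y where w: "w = br1 x y"
        by blast
      obtain u v where u: "\<phi> (center_coset br1 x) = center_coset br2 u"
        and v: "\<phi> (center_coset br1 y) = center_coset br2 v"
        using phi_lift_exists by meson
      show "w \<in> ?P"
        using phi_hom[OF u v] compatible[OF u v] L1.br_in_derived w by simp
    qed
    show "L1.subspace ?P"
      using L1.subspace_derived phi_zero theta_zero phi_hom theta_hom phi_scale theta_scale
      by (intro L1.subspaceI) (simp_all add: L1.subspace_0 L1.subspace_add L1.subspace_scale)
  qed
  then show ?thesis
    using assms unfolding derived_def by blast
qed

lemma even_linear_lift:
  obtains f where "Vector_Spaces.linear sc1 sc2 f" "\<And>d. d \<in> derived sc1 br1 \<Longrightarrow> f d = \<theta> d"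
    "\<And>x. \<phi> (center_coset br1 x) = center_coset br2 (f x)" "\<And>i. f ` G1 i \<subseteq> G2 i"
proof (rule even_linear_extension[where \<theta> = \<theta> and R = "\<lambda>x u. \<phi> (center_coset br1 x) = center_coset br2 u"])
  show "L1.subspace (derived sc1 br1)"
    by (rule L1.subspace_derived)
qed (use L1.derived_graded theta_hom theta_scale theta_grade phi_hom phi_scale phi_grade
      theta_lifts_phi in auto)

lemma inj_lift_if_stem:
  assumes "stem sc1 br1" and f: "Vector_Spaces.linear sc1 sc2 f"
    "\<And>d. d \<in> derived sc1 br1 \<Longrightarrow> f d = \<theta> d"
    "\<And>x. \<phi> (center_coset br1 x) = center_coset br2 (f x)"
  shows "inj f"
  unfolding linear_inj_iff_eq_0[OF f(1)]
proof (intro allI impI)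
  fix x assume "f x = 0"
  then have "\<phi> (center_coset br1 x) = \<phi> (center_coset br1 0)"
    using f(3) phi_zero by simp
  then have "center_coset br1 x = center_coset br1 0"
    by (rule inj_onD[OF bij_betw_imp_inj_on[OF phi_bij]]) simp_all
  then have "x \<in> lcenter br1"
    by (simp add: L1.lcenter_coset_eq_iff)
  then have x: "x \<in> derived sc1 br1"
    using assms(1) unfolding stem_def by blast
  then have "\<theta> x = \<theta> 0"
    using f(2) \<open>f x = 0\<close> theta_zero by simp
  then show "x = 0"
    by (rule inj_onD[OF bij_betw_imp_inj_on[OF theta_bij] _ x L1.subspace_0[OF L1.subspace_derived]])
qed

lemma surj_lift_if_stem:
  assumes "stem sc2 br2" and f: "Vector_Spaces.linear sc1 sc2 f"
    "\<And>d. d \<in> derived sc1 br1 \<Longrightarrow> f d = \<theta> d"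
    "\<And>x. \<phi> (center_coset br1 x) = center_coset br2 (f x)"
  shows "surj f"
  unfolding surj_def
proof
  fix y
  have "center_coset br2 y \<in> \<phi> ` range (center_coset br1)"
    using bij_betw_imp_surj_on[OF phi_bij] by simp
  then obtain x where "\<phi> (center_coset br1 x) = center_coset br2 y"
    by blast
  then have "center_coset br2 (f x) = center_coset br2 y"
    using f(3) by simp
  then have "y - f x \<in> lcenter br2"
    using L2.lcenter_coset_eq_iff[of y "f x"] by simp
  then have "y - f x \<in> \<theta> ` derived sc1 br1"
    using assms(1) bij_betw_imp_surj_on[OF theta_bij] unfolding stem_def by blast
  then obtain d where "d \<in> derived sc1 br1" "y - f x = f d"
    using f(2) by auto
  then have "y = f (x + d)"
    using linear_add[OF f(1)] by (simp add: algebra_simps)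
  then show "\<exists>x. y = f x" ..
qed

lemma lsa_isomorphic_if_stem:
  assumes "stem sc1 br1" "stem sc2 br2"
  shows "lsa_isomorphic sc1 G1 br1 sc2 G2 br2"
proof (rule even_linear_lift)
  fix f assume f: "Vector_Spaces.linear sc1 sc2 f" "\<And>d. d \<in> derived sc1 br1 \<Longrightarrow> f d = \<theta> d"
    "\<And>x. \<phi> (center_coset br1 x) = center_coset br2 (f x)" "\<And>i. f ` G1 i \<subseteq> G2 i"
  have "f (br1 x y) = br2 (f x) (f y)" for x y
    using f(2)[OF L1.br_in_derived] compatible[OF f(3) f(3)] by simp
  moreover have "bij f"
    using inj_lift_if_stem[OF assms(1) f(1-3)] surj_lift_if_stem[OF assms(2) f(1-3)] by (simp add: bij_def)
  ultimately show ?thesis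
    unfolding lsa_isomorphic_def using f(1,4) by blast
qed

end

lemma (in lsa_pair) isoclinism_image:
  assumes f: "bij f" "Vector_Spaces.linear sc1 sc2 f" "\<And>x y. f (br1 x y) = br2 (f x) (f y)"
    "\<And>i. f ` G1 i \<subseteq> G2 i"
  shows "isoclinism sc1 G1 br1 sc2 G2 br2 ((`) f) f"
proof -
  have derived: "f ` derived sc1 br1 = derived sc2 br2"
    by (rule linear_image_derived[OF f(2) bij_is_surj[OF f(1)] f(3)])
  have coset: "f ` center_coset br1 x = center_coset br2 (f x)" for x
    by (rule bij_image_center_coset[OF f(1-3)])
  have lift_iff: "f ` center_coset br1 x = center_coset br2 u \<longleftrightarrow> f x - u \<in> lcenter br2" for x u
    using coset L2.lcenter_coset_eq_iff by simp
  show ?thesis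
  proof (rule isoclinism.intro[OF lsa_pair_axioms isoclinism_axioms.intro])
    show "bij_betw ((`) f) (range (center_coset br1)) (range (center_coset br2))"
      by (rule bij_betw_image_center_coset[OF f(1-3)])
  next
    fix x y u v
    assume "f ` center_coset br1 x = center_coset br2 u" "f ` center_coset br1 y = center_coset br2 v"
    then have x: "f x - u \<in> lcenter br2" and y: "f y - v \<in> lcenter br2"
      by (simp_all add: lift_iff)
    have "f (x + y) - (u + v) = (f x - u) + (f y - v)"
      by (simp add: linear_add[OF f(2)] algebra_simps)
    also have "\<dots> \<in> lcenter br2"
      by (rule L2.subspace_add[OF L2.subspace_lcenter x y])
    finally have "f (x + y) - (u + v) \<in> lcenter br2" .
    moreover have "f (br1 x y) = br2 u v"
      using L2.br_eq_mod_lcenter[OF x y] f(3) by simp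
    ultimately show "f ` center_coset br1 (x + y) = center_coset br2 (u + v) \<and>
      f ` center_coset br1 (br1 x y) = center_coset br2 (br2 u v)"
      by (simp add: lift_iff L2.subspace_0[OF L2.subspace_lcenter])
  next
    fix c x u
    assume "f ` center_coset br1 x = center_coset br2 u"
    then have "f x - u \<in> lcenter br2"
      by (simp add: lift_iff)
    then have "sc2 c (f x - u) \<in> lcenter br2"
      by (rule L2.subspace_scale[OF L2.subspace_lcenter])
    then show "f ` center_coset br1 (sc1 c x) = center_coset br2 (sc2 c u)"
      by (simp add: lift_iff linear_scale[OF f(2)] L2.scale_right_diff_distrib)
  next
    fix i x
    assume "x \<in> G1 i"
    then show "\<exists>u\<in>G2 i. f ` center_coset br1 x = center_coset br2 u"
      using f(4) coset by blast
  next
    show "bij_betw f (derived sc1 br1) (derived sc2 br2)"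
      by (rule bij_betw_subset[OF f(1) subset_UNIV derived])
  next
    fix l m k r
    assume "f ` center_coset br1 l = center_coset br2 k" "f ` center_coset br1 m = center_coset br2 r"
    then show "f (br1 l m) = br2 k r"
      using L2.br_eq_mod_lcenter f(3) by (simp add: lift_iff)
  next
    show "f (x + y) = f x + f y \<and> f (br1 x y) = br2 (f x) (f y)" for x y
      by (simp add: linear_add[OF f(2)] f(3))
    show "f (sc1 c x) = sc2 c (f x)" for c x
      by (rule linear_scale[OF f(2)])
    show "f ` (derived sc1 br1 \<inter> G1 i) \<subseteq> G2 i" for i
      using f(4) by blast
  qed
qed

theorem theorem3p6:
  fixes sc1 :: "'k::field \<Rightarrow> 'a::ab_group_add \<Rightarrow> 'a" and G1 :: "bool \<Rightarrow> 'a set"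
    and br1 :: "'a \<Rightarrow> 'a \<Rightarrow> 'a"
    and sc2 :: "'k \<Rightarrow> 'b::ab_group_add \<Rightarrow> 'b" and G2 :: "bool \<Rightarrow> 'b set"
    and br2 :: "'b \<Rightarrow> 'b \<Rightarrow> 'b"
  assumes "(2::'k) \<noteq> 0" and "(3::'k) \<noteq> 0"
    and "lie_superalgebra sc1 G1 br1" and "fin_dim sc1" and "stem sc1 br1"
    and "lie_superalgebra sc2 G2 br2" and "fin_dim sc2" and "stem sc2 br2"
  shows "isoclinic sc1 G1 br1 sc2 G2 br2 \<longleftrightarrow> lsa_isomorphic sc1 G1 br1 sc2 G2 br2"
proof -
  interpret lsa_pair sc1 G1 br1 sc2 G2 br2
    using assms(3,6) by (simp add: lsa_pair_def lsa_def)
  show ?thesis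
  proof
    assume "isoclinic sc1 G1 br1 sc2 G2 br2"
    then obtain \<phi> \<theta> where "isoclinism sc1 G1 br1 sc2 G2 br2 \<phi> \<theta>"
      by (auto simp: isoclinic_iff_isoclinism)
    then show "lsa_isomorphic sc1 G1 br1 sc2 G2 br2"
      using isoclinism.lsa_isomorphic_if_stem assms(5,8) by blast
  next
    assume "lsa_isomorphic sc1 G1 br1 sc2 G2 br2"
    then obtain f where "bij f" "Vector_Spaces.linear sc1 sc2 f"
      "\<And>x y. f (br1 x y) = br2 (f x) (f y)" "\<And>i. f ` G1 i \<subseteq> G2 i"
      unfolding lsa_isomorphic_def by blast
    then show "isoclinic sc1 G1 br1 sc2 G2 br2"
      using isoclinism_image isoclinic_iff_isoclinism by blast
  qed
qed

end
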